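(* Let $R$ be a ring with identity and $a,b,c\in R$. The following are equivalent: (i) $a$ is left $(b,c)$-invertible; (ii) $a^\circ\cap bR=\{0\}$, $abR\cap c^\circ=\{0\}$ and $R=Rca+{}^\circ b$; (iii) $a^\circ\cap bR=\{0\}$ and $R=Rca+{}^\circ b$; (iv) $abR\cap c^\circ=\{0\}$ and $R=Rca+{}^\circ b$; (v) $R=Rca+{}^\circ b$.
   Context: For $x\in R$: $xR=\{xr:r\in R\}$, $Rx=\{rx:r\in R\}$, $x^\circ=\{r: xr=0\}$, ${}^\circ x=\{r: rx=0\}$. The element $a$ is left $(b,c)$-invertible if there is $y\in R$ with $Ry\subseteq Rc$ and $yab=b$. *)

theory Defs
  imports Main
begin

definition rideal :: "'a::ring_1 \<Rightarrow> 'a set" where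
  "rideal x = {x * r | r. True}"

definition lideal :: "'a::ring_1 \<Rightarrow> 'a set" where
  "lideal x = {r * x | r. True}"

definition rann :: "'a::ring_1 \<Rightarrow> 'a set" where
  "rann x = {r. x * r = 0}"

definition lann :: "'a::ring_1 \<Rightarrow> 'a set" where
  "lann x = {r. r * x = 0}"

definition left_bc_invertible :: "'a::ring_1 \<Rightarrow> 'a \<Rightarrow> 'a \<Rightarrow> bool" where
  "left_bc_invertible a b c \<longleftrightarrow> (\<exists>y. lideal y \<subseteq> lideal c \<and> y * a * b = b)"

end

theory Submission
  imports Defs
begin

text \<open>All five conditions are equivalent to \<open>b \<in> R c a b\<close>, i.e. \<open>s c a b = b\<close> for some \<open>s\<close>:
for (i) take \<open>y = s c\<close>; for (v) decompose \<open>1 = s c a + z\<close> with \<open>z b = 0\<close>, and conversely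
\<open>t = t s c a + (t - t s c a)\<close>. Both annihilator conditions follow from \<open>s c a b = b\<close>:
if \<open>a b r = 0\<close> or \<open>c a b r = 0\<close>, then \<open>b r = s c a b r = 0\<close>.\<close>

lemma mem_lideal_iff: "x \<in> lideal c \<longleftrightarrow> (\<exists>s. x = s * c)"
  by (auto simp: lideal_def)

lemma lideal_subset_lideal_iff: "lideal y \<subseteq> lideal c \<longleftrightarrow> y \<in> lideal c"
proof
  assume "lideal y \<subseteq> lideal c"
  moreover have "y \<in> lideal y"
    using mem_lideal_iff[of y y] by (metis mult_1_left)
  ultimately show "y \<in> lideal c" by blast
next
  assume "y \<in> lideal c"
  then show "lideal y \<subseteq> lideal c"
    by (auto simp: mem_lideal_iff) (metis mult.assoc)
qed

lemma left_bc_invertible_iff: "left_bc_invertible a b c \<longleftrightarrow> (\<exists>s. s * c * a * b = b)"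
  unfolding left_bc_invertible_def lideal_subset_lideal_iff mem_lideal_iff by blast

lemma lideal_plus_lann_eq_UNIV_iff:
  fixes a b c :: "'a::ring_1"
  shows "UNIV = {x + y | x y. x \<in> lideal (c * a) \<and> y \<in> lann b} \<longleftrightarrow> (\<exists>s. s * c * a * b = b)"
    (is "UNIV = ?S \<longleftrightarrow> _")
proof
  assume "UNIV = ?S"
  then have "1 \<in> ?S" by blast
  then obtain s z where "1 = s * (c * a) + z" and "z * b = 0"
    by (auto simp: mem_lideal_iff lann_def)
  then have "b = s * c * a * b + z * b"
    by (metis distrib_right mult_1_left mult.assoc)
  with \<open>z * b = 0\<close> show "\<exists>s. s * c * a * b = b" by (metis add_0_right)
next
  assume "\<exists>s. s * c * a * b = b"
  then obtain s where s: "s * c * a * b = b" by blast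
  have "t \<in> ?S" for t
  proof -
    have "(t - t * s * c * a) * b = 0"
      using s by (simp add: algebra_simps mult.assoc)
    moreover have "t * s * c * a \<in> lideal (c * a)"
      unfolding mem_lideal_iff by (metis mult.assoc)
    ultimately show ?thesis
      by (force simp: lann_def)
  qed
  then show "UNIV = ?S" by blast
qed

lemma zero_mem_rideal: "0 \<in> rideal x"
  unfolding rideal_def by (metis (mono_tags) mem_Collect_eq mult_zero_right)

lemma rann_inter_rideal_eq_zero:
  assumes "s * c * a * b = b"
  shows "rann a \<inter> rideal b = {0}"
proof -
  have "x = 0" if "a * x = 0" and "x = b * r" for x r
    using that assms by (metis mult.assoc mult_zero_right)
  then show ?thesis
    using zero_mem_rideal[of b] by (auto simp: rann_def rideal_def)
qed

lemma rideal_inter_rann_eq_zero: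
  assumes "s * c * a * b = b"
  shows "rideal (a * b) \<inter> rann c = {0}"
proof -
  have "x = 0" if "c * x = 0" and "x = a * b * r" for x r
    using that assms by (metis mult.assoc mult_zero_right)
  then show ?thesis
    using zero_mem_rideal[of "a * b"] by (auto simp: rann_def rideal_def)
qed

theorem theorem2p13:
  fixes a b c :: "'a::ring_1"
  defines "S \<equiv> {x + y | x y. x \<in> lideal (c * a) \<and> y \<in> lann b}"
  shows "(left_bc_invertible a b c
          \<longleftrightarrow> (rann a \<inter> rideal b = {0} \<and> rideal (a * b) \<inter> rann c = {0} \<and> UNIV = S))
       \<and> ((rann a \<inter> rideal b = {0} \<and> rideal (a * b) \<inter> rann c = {0} \<and> UNIV = S)
          \<longleftrightarrow> (rann a \<inter> rideal b = {0} \<and> UNIV = S))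
       \<and> ((rann a \<inter> rideal b = {0} \<and> UNIV = S)
          \<longleftrightarrow> (rideal (a * b) \<inter> rann c = {0} \<and> UNIV = S))
       \<and> ((rideal (a * b) \<inter> rann c = {0} \<and> UNIV = S)
          \<longleftrightarrow> UNIV = S)"
proof -
  have S: "UNIV = S \<longleftrightarrow> (\<exists>s. s * c * a * b = b)"
    unfolding S_def by (rule lideal_plus_lann_eq_UNIV_iff)
  have "UNIV = S \<Longrightarrow> rann a \<inter> rideal b = {0}"
    and "UNIV = S \<Longrightarrow> rideal (a * b) \<inter> rann c = {0}"
    using S rann_inter_rideal_eq_zero rideal_inter_rann_eq_zero by blast+
  then show ?thesis
    using S left_bc_invertible_iff[of a b c] by argo
qed

end
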